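(* A multiplicity-one-free word of length 5 in the alphabet $\alpha$ is homotopically skew-symmetric if and only if it is contractible or skew-symmetric.
   Context: Fix a set $\alpha$ with an involution $\tau:\alpha\to\alpha$. An $\alpha$-alphabet is a set $\mathcal A$ with a map $A\mapsto|A|\in\alpha$. An étale word over $\alpha$ is a pair $(\mathcal A,w)$ with $\mathcal A$ an $\alpha$-alphabet and $w$ a finite word in letters of $\mathcal A$; étale words are isomorphic if a bijection of alphabets preserving $|\cdot|$ carries one word letterwise to the other. The opposite of $(\mathcal A,w)$ is $(\mathcal A,w^-)$ with $w^-$ the reversed word; its inverse is $(\overline{\mathcal A},w)$ where $\overline{\mathcal A}$ is $\mathcal A$ with projection $A\mapsto\tau(|A|)$; write $\overline w^-$ for the inverse of the opposite. A nanoword is an étale word with $\mathcal A$ finite and every letter occurring exactly twice. Homotopy moves on nanowords ($x,y,z,t$ words in the remaining letters): (1) $(\mathcal A,xAAy)\mapsto(\mathcal A\setminus\{A\},xy)$; (2) $(\mathcal A,xAByBAz)\mapsto(\mathcal A\setminus\{A,B\},xyz)$ if $|B|=\tau(|A|)$; (3) $(\mathcal A,xAByACzBCt)\mapsto(\mathcal A,xBAyCAzCBt)$ if $A,B,C$ distinct with $|A|=|B|=|C|$. Homotopy of nanowords ($\simeq$) is generated by isomorphisms, these moves and inverses. Desingularization: for an étale word $(\mathcal A,w)$ with $m_w(A)$ the number of occurrences of $A$, let $\mathcal A^d=\{A_{i,j}:1\le i<j\le m_w(A)\}$, $|A_{i,j}|=|A|$, and $w^d$ obtained from $w$ by deleting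 letters of multiplicity 1 and replacing the $i$-th occurrence of $A$ ($m=m_w(A)\ge2$) by $A_{1,i}\cdots A_{i-1,i}A_{i,i+1}\cdots A_{i,m}$. An étale word $w$ is contractible if $w^d$ is homotopic to the empty nanoword, and homotopically skew-symmetric if $w^d\simeq\overline{w^d}^-$. An étale word is skew-symmetric if it is isomorphic to $\overline w^-$. A word in the alphabet $\alpha$ is regarded as the étale word $(\alpha,w)$ with identity projection. A word is multiplicity-one-free if every letter occurring in it occurs at least twice. *)

theory Defs
  imports Main
begin

(* An etale word over alpha: an alphabet set Al :: 'b set, a projection p :: 'b => 'a
   (the map A |-> |A|), and a word w :: 'b list with letters in Al. *)

definition etale_iso ::
  "'b set \<Rightarrow> ('b \<Rightarrow> 'a) \<Rightarrow> 'b list \<Rightarrow> 'c set \<Rightarrow> ('c \<Rightarrow> 'a) \<Rightarrow> 'c list \<Rightarrow> bool" where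
  "etale_iso Al p w Al' p' w' \<longleftrightarrow>
     (\<exists>f. bij_betw f Al Al' \<and> (\<forall>x\<in>Al. p' (f x) = p x) \<and> map f w = w')"

(* a word in alpha is the etale word (alpha, w) with identity projection;
   it is skew-symmetric if isomorphic to the inverse of its opposite *)
definition skew_symmetric :: "('a \<Rightarrow> 'a) \<Rightarrow> 'a list \<Rightarrow> bool" where
  "skew_symmetric \<tau> w \<longleftrightarrow> etale_iso UNIV id w UNIV \<tau> (rev w)"

definition mult_one_free :: "'a list \<Rightarrow> bool" where
  "mult_one_free w \<longleftrightarrow> (\<forall>x\<in>set w. count_list w x \<ge> 2)"

(* Nanowords: alphabet = set of letters of w (finite), each occurring exactly twice *)
definition is_nanoword :: "'b list \<Rightarrow> bool" where
  "is_nanoword w \<longleftrightarrow> (\<forall>x\<in>set w. count_list w x = 2)"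

inductive nano_step :: "('a \<Rightarrow> 'a) \<Rightarrow> ('b \<Rightarrow> 'a) \<times> 'b list \<Rightarrow> ('b \<Rightarrow> 'a) \<times> 'b list \<Rightarrow> bool"
  for \<tau> :: "'a \<Rightarrow> 'a" where
  iso: "is_nanoword w \<Longrightarrow> etale_iso (set w) p w (set w') p' w' \<Longrightarrow>
        nano_step \<tau> (p, w) (p', w')"
| move1: "is_nanoword (x @ [A, A] @ y) \<Longrightarrow>
        nano_step \<tau> (p, x @ [A, A] @ y) (p, x @ y)"
| move2: "is_nanoword (x @ [A, B] @ y @ [B, A] @ z) \<Longrightarrow> p B = \<tau> (p A) \<Longrightarrow>
        nano_step \<tau> (p, x @ [A, B] @ y @ [B, A] @ z) (p, x @ y @ z)"
| move3: "is_nanoword (x @ [A, B] @ y @ [A, C] @ z @ [B, C] @ t) \<Longrightarrow>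
        A \<noteq> B \<Longrightarrow> A \<noteq> C \<Longrightarrow> B \<noteq> C \<Longrightarrow> p A = p B \<Longrightarrow> p B = p C \<Longrightarrow>
        nano_step \<tau> (p, x @ [A, B] @ y @ [A, C] @ z @ [B, C] @ t)
                    (p, x @ [B, A] @ y @ [C, A] @ z @ [C, B] @ t)"

definition nano_homotopic :: "('a \<Rightarrow> 'a) \<Rightarrow> ('b \<Rightarrow> 'a) \<times> 'b list \<Rightarrow> ('b \<Rightarrow> 'a) \<times> 'b list \<Rightarrow> bool" where
  "nano_homotopic \<tau> = (\<lambda>u v. nano_step \<tau> u v \<or> nano_step \<tau> v u)\<^sup>*\<^sup>*"

(* Desingularization of an etale word w :: 'b list: the letter A_{i,j} is (A, i, j);
   the k-th position holding the i-th occurrence of A (m = multiplicity of A) is replaced by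
   A_{1,i} ... A_{i-1,i} A_{i,i+1} ... A_{i,m} if m >= 2, and deleted if m = 1. *)
definition desing_letter :: "'b list \<Rightarrow> nat \<Rightarrow> ('b \<times> nat \<times> nat) list" where
  "desing_letter w k =
     (let A = w ! k; i = count_list (take k w) A + 1; m = count_list w A in
      if m < 2 then []
      else map (\<lambda>j. (A, j, i)) [1..<i] @ map (\<lambda>j. (A, i, j)) [i+1..<m+1])"

definition desing :: "'b list \<Rightarrow> ('b \<times> nat \<times> nat) list" where
  "desing w = concat (map (desing_letter w) [0..<length w])"

(* For a word w in alpha (identity projection), w^d has projection A_{i,j} |-> A, i.e. fst. *)
definition contractible :: "('a \<Rightarrow> 'a) \<Rightarrow> 'a list \<Rightarrow> bool" where
  "contractible \<tau> w \<longleftrightarrow> nano_homotopic \<tau> (fst, desing w) (fst, [])"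

definition homot_skew_symmetric :: "('a \<Rightarrow> 'a) \<Rightarrow> 'a list \<Rightarrow> bool" where
  "homot_skew_symmetric \<tau> w \<longleftrightarrow>
     nano_homotopic \<tau> (fst, desing w) (\<tau> \<circ> fst, rev (desing w))"

end

theory Submission
  imports Defs
begin

(*
  For a nanoword, give each letter c an index in Z/M: the mu-weighted signed count of the letters
  whose chords cross the chord of c.  Composing the maps phi |c| (index of c) : int => int along
  the word is a homotopy invariant once (phi, mu, M) satisfies the axioms of interlacing_data:
  move (1) deletes a letter of index 0, move (2) deletes two letters with projections a and tau a
  and equal indices (and shifts every other index by a multiple of mu a + mu (tau a)), and move (3)
  only permutes letters of one projection without changing any index.

  A multiplicity-one-free word of length 5 is A^5 or an arrangement of AAABB.  Depending on how
  tau acts on A and B, either an explicit homotopy contracts w^d, or an explicit isomorphism shows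
  that w is skew-symmetric and w^d is isomorphic to its inverse opposite, or w is not
  skew-symmetric and a suitable invariant of this kind separates w^d from its inverse opposite.
*)

section \<open>Homotopy of nanowords\<close>

lemma is_nanoword_rev: "is_nanoword (rev w) \<longleftrightarrow> is_nanoword w"
  by (simp add: is_nanoword_def)

lemma count_list_nanoword: "is_nanoword w \<Longrightarrow> c \<in> set w \<Longrightarrow> count_list w c = 2"
  by (simp add: is_nanoword_def)

lemma is_nanoword_replace_infix:
  assumes "is_nanoword (u @ s @ v)" and "\<forall>x\<in>set s'. count_list s' x = 2"
    and "(set s \<union> set s') \<inter> (set u \<union> set v) = {}"
  shows "is_nanoword (u @ s' @ v)"
  unfolding is_nanoword_def
proof
  fix a assume a: "a \<in> set (u @ s' @ v)"
  have absent: "count_list xs a = 0" if "a \<notin> set xs" for xs :: "'a list"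
    using that by (simp add: count_list_0_iff)
  show "count_list (u @ s' @ v) a = 2"
  proof (cases "a \<in> set s'")
    case True
    with assms(3) have "a \<notin> set u" "a \<notin> set v" by auto
    with True assms(2) show ?thesis by (simp add: absent)
  next
    case False
    with a assms(3) have "a \<in> set u \<union> set v" "a \<notin> set s" by auto
    then have "count_list (u @ s @ v) a = 2" by (intro count_list_nanoword[OF assms(1)]) auto
    with False \<open>a \<notin> set s\<close> show ?thesis by (simp add: absent)
  qed
qed

lemma nano_homotopic_refl: "nano_homotopic \<tau> u u"
  by (simp add: nano_homotopic_def)

lemma nano_homotopic_trans [trans]:
  "nano_homotopic \<tau> u v \<Longrightarrow> nano_homotopic \<tau> v w \<Longrightarrow> nano_homotopic \<tau> u w"
  unfolding nano_homotopic_def by (rule rtranclp_trans)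

lemma nano_homotopic_sym: "nano_homotopic \<tau> u v \<Longrightarrow> nano_homotopic \<tau> v u"
  unfolding nano_homotopic_def
  by (induction rule: rtranclp_induct) (auto intro: converse_rtranclp_into_rtranclp)

lemma nano_step_imp_homotopic: "nano_step \<tau> u v \<Longrightarrow> nano_homotopic \<tau> u v"
  unfolding nano_homotopic_def by (rule r_into_rtranclp) simp

lemma nano_step_converse_imp_homotopic: "nano_step \<tau> v u \<Longrightarrow> nano_homotopic \<tau> u v"
  unfolding nano_homotopic_def by (rule r_into_rtranclp) simp

lemma nano_homotopic_induct [consumes 1, case_names refl step]:
  assumes "nano_homotopic \<tau> u v" and "P u"
    and "\<And>a b. nano_step \<tau> a b \<Longrightarrow> P a \<longleftrightarrow> P b"
  shows "P v"
  using assms(1) unfolding nano_homotopic_def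
  by (induction rule: rtranclp_induct) (use assms(2,3) in blast)+

lemma nano_step_inverse_opposite:
  assumes inv: "\<tau> \<circ> \<tau> = id" and st: "nano_step \<tau> (p, w) (p', w')"
  shows "nano_step \<tau> (\<tau> \<circ> p, rev w) (\<tau> \<circ> p', rev w')"
  using st
proof (cases rule: nano_step.cases)
  case iso
  then obtain f where "bij_betw f (set w) (set w')" "\<forall>x\<in>set w. p' (f x) = p x" "map f w = w'"
    unfolding etale_iso_def by blast
  then have "etale_iso (set (rev w)) (\<tau> \<circ> p) (rev w) (set (rev w')) (\<tau> \<circ> p') (rev w')"
    unfolding etale_iso_def by (auto simp: rev_map[symmetric])
  with iso show ?thesis by (intro nano_step.iso) (simp_all add: is_nanoword_rev)
next
  case (move1 x A y)
  have "nano_step \<tau> (\<tau> \<circ> p, rev y @ [A, A] @ rev x) (\<tau> \<circ> p, rev y @ rev x)"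
    by (rule nano_step.move1) (use move1 is_nanoword_rev[of w] in simp)
  with move1 show ?thesis by simp
next
  case (move2 x A B y z)
  have "nano_step \<tau> (\<tau> \<circ> p, rev z @ [A, B] @ rev y @ [B, A] @ rev x) (\<tau> \<circ> p, rev z @ rev y @ rev x)"
    by (rule nano_step.move2) (use move2 is_nanoword_rev[of w] in \<open>simp_all add: pointfree_idE[OF inv]\<close>)
  with move2 show ?thesis by simp
next
  case (move3 x A B y C z t)
  have "nano_step \<tau> (\<tau> \<circ> p, rev t @ [C, B] @ rev z @ [C, A] @ rev y @ [B, A] @ rev x)
                       (\<tau> \<circ> p, rev t @ [B, C] @ rev z @ [A, C] @ rev y @ [A, B] @ rev x)"
    by (rule nano_step.move3) (use move3 is_nanoword_rev[of w] in simp_all)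
  with move3 show ?thesis by simp
qed

lemma nano_homotopic_remove_repeat:
  assumes "is_nanoword (u @ v)" "d \<notin> set (u @ v)"
  shows "nano_homotopic \<tau> (p, u @ [d, d] @ v) (p, u @ v)"
  by (rule nano_step_imp_homotopic, rule nano_step.move1, rule is_nanoword_replace_infix[of u "[]" v])
     (use assms in auto)

lemma nano_homotopic_inverse_opposite:
  assumes "\<tau> \<circ> \<tau> = id" and "nano_homotopic \<tau> (p, w) (p', w')"
  shows "nano_homotopic \<tau> (\<tau> \<circ> p, rev w) (\<tau> \<circ> p', rev w')"
proof -
  have "nano_homotopic \<tau> (\<tau> \<circ> p, rev w) (\<tau> \<circ> fst u, rev (snd u))"
    if "nano_homotopic \<tau> (p, w) u" for u
    using that
  proof (induction rule: nano_homotopic_induct)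
    case refl
    then show ?case by (simp add: nano_homotopic_refl)
  next
    case (step a b)
    then have "nano_step \<tau> (\<tau> \<circ> fst a, rev (snd a)) (\<tau> \<circ> fst b, rev (snd b))"
      using nano_step_inverse_opposite[OF assms(1), of "fst a" "snd a" "fst b" "snd b"] by simp
    then show ?case
      by (meson nano_homotopic_trans nano_step_imp_homotopic nano_step_converse_imp_homotopic)
  qed
  from this[OF assms(2)] show ?thesis by simp
qed

lemma homot_skew_symmetric_if_contractible:
  assumes "\<tau> \<circ> \<tau> = id" and "contractible \<tau> w"
  shows "homot_skew_symmetric \<tau> w"
proof -
  have contract: "nano_homotopic \<tau> (fst, desing w) (fst, [])"
    using assms(2) by (simp add: contractible_def)
  also have "nano_homotopic \<tau> (fst, []) (\<tau> \<circ> fst, [])"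
    by (intro nano_step_imp_homotopic nano_step.iso) (auto simp: is_nanoword_def etale_iso_def)
  also have "nano_homotopic \<tau> (\<tau> \<circ> fst, []) (\<tau> \<circ> fst, rev (desing w))"
    using nano_homotopic_inverse_opposite[OF assms(1) contract] by (simp add: nano_homotopic_sym)
  finally show ?thesis by (simp add: homot_skew_symmetric_def)
qed

lemma skew_symmetric_iff:
  assumes "\<tau> \<circ> \<tau> = id"
  shows "skew_symmetric \<tau> w \<longleftrightarrow> map \<tau> w = rev w"
proof
  assume "skew_symmetric \<tau> w"
  then obtain f where "\<forall>x. \<tau> (f x) = x" "map f w = rev w"
    unfolding skew_symmetric_def etale_iso_def by auto
  moreover from this(1) have "f = \<tau>"
    by (metis pointfree_idE[OF assms] ext)
  ultimately show "map \<tau> w = rev w" by simp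
next
  assume "map \<tau> w = rev w"
  moreover have "bij \<tau>" using assms by (metis o_bij)
  ultimately show "skew_symmetric \<tau> w"
    unfolding skew_symmetric_def etale_iso_def using pointfree_idE[OF assms] by auto
qed

lemma homot_skew_symmetric_if_involutive_iso:
  assumes "is_nanoword (desing w)"
    and "\<forall>x\<in>set (desing w). f (f x) = x \<and> \<tau> (fst (f x)) = fst x"
    and "map f (desing w) = rev (desing w)"
  shows "homot_skew_symmetric \<tau> w"
proof -
  have "inj_on f (set (desing w))" by (rule inj_on_inverseI[of _ f]) (use assms(2) in auto)
  moreover have "f ` set (desing w) = set (rev (desing w))" by (metis assms(3) set_map)
  ultimately have "etale_iso (set (desing w)) fst (desing w) (set (rev (desing w))) (\<tau> \<circ> fst) (rev (desing w))"
    unfolding etale_iso_def bij_betw_def using assms(2,3) by auto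
  then show ?thesis
    unfolding homot_skew_symmetric_def by (intro nano_step_imp_homotopic nano_step.iso assms(1))
qed

section \<open>Interlacing invariants\<close>

fun signed_sum :: "('b \<Rightarrow> int) \<Rightarrow> 'b set \<Rightarrow> 'b list \<Rightarrow> int" where
  "signed_sum m S [] = 0"
| "signed_sum m S (c # w) = (if c \<in> S then - m c else m c) + signed_sum m (insert c S) w"

(* Between the two occurrences of D, a letter read for the first time counts +m c and a letter
   already in S (read before) counts -m c; so a chord lying inside the chord of D contributes
   nothing and only chords crossing it count. *)
fun chord_sum :: "('b \<Rightarrow> int) \<Rightarrow> 'b \<Rightarrow> 'b set \<Rightarrow> bool \<Rightarrow> 'b list \<Rightarrow> int" where
  "chord_sum m D S inside [] = 0"
| "chord_sum m D S inside (c # w) =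
     (if c = D then (if inside then 0 else chord_sum m D (insert c S) True w)
      else (if inside then (if c \<in> S then - m c else m c) else 0)
           + chord_sum m D (insert c S) inside w)"

lemma signed_sum_append:
  "signed_sum m S (u @ v) = signed_sum m S u + signed_sum m (S \<union> set u) v"
  by (induction u arbitrary: S) auto

lemma chord_sum_eq_signed_sum:
  assumes "D \<notin> set x" "D \<notin> set y"
  shows "chord_sum m D S False (x @ D # y @ D # z) = signed_sum m (insert D (S \<union> set x)) y"
proof -
  have outside: "chord_sum m D S False (x @ v) = chord_sum m D (S \<union> set x) False v" for S v
    using assms(1) by (induction x arbitrary: S) auto
  have inside: "chord_sum m D S True (y @ D # z) = signed_sum m S y" for S
    using assms(2) by (induction y arbitrary: S) auto
  show ?thesis by (simp add: outside inside)
qed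

lemma chord_sum_insert_absent:
  "c \<notin> set w \<Longrightarrow> chord_sum m D (insert c S) inside w = chord_sum m D S inside w"
proof (induction w arbitrary: S inside)
  case (Cons a w)
  then have "chord_sum m D (insert a (insert c S)) b w = chord_sum m D (insert a S) b w" for b
    by (simp add: insert_commute[of a c])
  with Cons.prems show ?case by auto
qed simp

lemma chord_sum_swap_adjacent:
  assumes "a \<noteq> b" "a \<noteq> D" "b \<noteq> D"
  shows "chord_sum m D S inside (u @ a # b # v) = chord_sum m D S inside (u @ b # a # v)"
  using assms by (induction u arbitrary: S inside) (auto simp: insert_commute)

lemma chord_sum_remove_repeat:
  assumes "A \<noteq> D" "A \<notin> S" "A \<notin> set u" "A \<notin> set v"
  shows "chord_sum m D S inside (u @ A # A # v) = chord_sum m D S inside (u @ v)"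
  using assms by (induction u arbitrary: S inside) (auto simp: chord_sum_insert_absent)

lemma chord_sum_remove_seen_pair:
  assumes "A \<noteq> D" "B \<noteq> D" "A \<in> S" "B \<in> S" "A \<notin> set y \<union> set z" "B \<notin> set y \<union> set z"
  shows "\<exists>k. chord_sum m D S inside (y @ B # A # z) = chord_sum m D S inside (y @ z) + k * (m A + m B)"
  using assms
proof (induction y arbitrary: S inside)
  case Nil
  then have "insert A (insert B S) = S" by auto
  with Nil show ?case
    by (intro exI[of _ "if inside then -1 else 0"]) (auto simp: algebra_simps)
next
  case (Cons c y)
  then obtain k where "chord_sum m D (insert c S) (inside \<or> c = D) (y @ B # A # z)
      = chord_sum m D (insert c S) (inside \<or> c = D) (y @ z) + k * (m A + m B)"
    by (metis insertI2 Un_iff list.set_intros(2))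
  then show ?case by (cases "c = D"; cases inside) auto
qed

lemma chord_sum_remove_cancelling_pair:
  assumes "A \<noteq> D" "B \<noteq> D" "A \<noteq> B" "A \<notin> S" "B \<notin> S"
    and "A \<notin> set u \<union> set y \<union> set z" "B \<notin> set u \<union> set y \<union> set z"
  shows "\<exists>k. chord_sum m D S inside (u @ A # B # y @ B # A # z)
             = chord_sum m D S inside (u @ y @ z) + k * (m A + m B)"
  using assms
proof (induction u arbitrary: S inside)
  case Nil
  obtain k where "chord_sum m D (insert B (insert A S)) inside (y @ B # A # z)
      = chord_sum m D (insert B (insert A S)) inside (y @ z) + k * (m A + m B)"
    using chord_sum_remove_seen_pair[of A D B "insert B (insert A S)" y z m inside] Nil.prems
    by auto
  moreover have "chord_sum m D (insert B (insert A S)) inside (y @ z) = chord_sum m D S inside (y @ z)"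
    using Nil.prems by (simp add: chord_sum_insert_absent)
  ultimately show ?case using Nil.prems
    by (intro exI[of _ "k + (if inside then 1 else 0)"]) (auto simp: algebra_simps)
next
  case (Cons c u)
  then obtain k where "chord_sum m D (insert c S) (inside \<or> c = D) (u @ A # B # y @ B # A # z)
      = chord_sum m D (insert c S) (inside \<or> c = D) (u @ y @ z) + k * (m A + m B)"
    by (metis insertE Un_iff list.set_intros(1,2))
  then show ?case by (cases "c = D"; cases inside) auto
qed

lemma chord_sum_map:
  assumes "inj_on f (insert D (S \<union> set w))" "\<forall>c\<in>set w. m' (f c) = m c"
  shows "chord_sum m' (f D) (f ` S) inside (map f w) = chord_sum m D S inside w"
  using assms
proof (induction w arbitrary: S inside)
  case (Cons c w)
  have IH: "chord_sum m' (f D) (insert (f c) (f ` S)) b (map f w) = chord_sum m D (insert c S) b w"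
    for b using Cons.IH[of "insert c S" b] Cons.prems by (simp add: insert_commute)
  show ?case
  proof (cases "c = D")
    case True
    with IH show ?thesis by simp
  next
    case False
    then have "f c \<noteq> f D" by (subst inj_on_eq_iff[OF Cons.prems(1)]) auto
    moreover have "f c \<in> f ` S \<longleftrightarrow> c \<in> S" by (rule inj_on_image_mem_iff[OF Cons.prems(1)]) auto
    ultimately show ?thesis using False IH Cons.prems(2) by simp
  qed
qed simp

context
  fixes A B C :: 'b and x y z t :: "'b list"
  assumes distinct: "distinct [A, B, C]" and fresh: "{A, B, C} \<inter> set (x @ y @ z @ t) = {}"
begin

lemma chord_sum_move3_other:
  assumes "D \<notin> {A, B, C}"
  shows "chord_sum m D S inside (x @ B # A # y @ C # A # z @ C # B # t)
       = chord_sum m D S inside (x @ A # B # y @ A # C # z @ B # C # t)"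
proof -
  from assms distinct have "A \<noteq> D" "B \<noteq> D" "C \<noteq> D" "A \<noteq> B" "A \<noteq> C" "B \<noteq> C" by auto
  then show ?thesis using
    chord_sum_swap_adjacent[of A B D m S inside x "y @ A # C # z @ B # C # t"]
    chord_sum_swap_adjacent[of A C D m S inside "x @ B # A # y" "z @ B # C # t"]
    chord_sum_swap_adjacent[of B C D m S inside "x @ B # A # y @ C # A # z" t]
    by simp
qed

lemma chord_sum_move3_first:
  assumes "m B = m C"
  shows "chord_sum m A {} False (x @ B # A # y @ C # A # z @ C # B # t)
       = chord_sum m A {} False (x @ A # B # y @ A # C # z @ B # C # t)"
proof -
  have "B \<noteq> A" "C \<noteq> A" using distinct by auto
  then have "chord_sum m A {} False (x @ A # B # y @ A # C # z @ B # C # t)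
      = m B + signed_sum m (insert A (insert B (set x))) y"
    and "chord_sum m A {} False (x @ B # A # y @ C # A # z @ C # B # t)
      = signed_sum m (insert A (insert B (set x))) y + m C"
    using chord_sum_eq_signed_sum[of A x "B # y" m "{}" "C # z @ B # C # t"]
      chord_sum_eq_signed_sum[of A "x @ [B]" "y @ [C]" m "{}" "z @ C # B # t"] distinct fresh
    by (simp_all add: signed_sum_append insert_commute[of B A])
  with assms show ?thesis by simp
qed

lemma chord_sum_move3_second:
  assumes "m A = m C"
  shows "chord_sum m B {} False (x @ B # A # y @ C # A # z @ C # B # t)
       = chord_sum m B {} False (x @ A # B # y @ A # C # z @ B # C # t)"
proof -
  let ?X = "insert A (insert B (set x))"
  let ?Y = "insert C (insert A (insert B (set x \<union> set y)))"
  have "B \<noteq> A" "C \<noteq> A" "C \<noteq> B" using distinct by auto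
  moreover have "insert A (insert C (insert A (insert B (set x \<union> set y)))) = ?Y" by auto
  ultimately have "chord_sum m B {} False (x @ A # B # y @ A # C # z @ B # C # t)
      = signed_sum m ?X y - m A + m C + signed_sum m ?Y z"
    and "chord_sum m B {} False (x @ B # A # y @ C # A # z @ C # B # t)
      = signed_sum m ?X y + signed_sum m ?Y z"
    using chord_sum_eq_signed_sum[of B "x @ [A]" "y @ A # C # z" m "{}" "C # t"]
      chord_sum_eq_signed_sum[of B x "A # y @ C # A # z @ [C]" m "{}" t] distinct fresh
    by (simp_all add: signed_sum_append insert_commute[of B A])
  with assms show ?thesis by simp
qed

lemma chord_sum_move3_third:
  assumes "m A = m B"
  shows "chord_sum m C {} False (x @ B # A # y @ C # A # z @ C # B # t)
       = chord_sum m C {} False (x @ A # B # y @ A # C # z @ B # C # t)"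
proof -
  let ?Y = "insert C (insert A (insert B (set x \<union> set y)))"
  have "B \<noteq> A" "C \<noteq> A" "C \<noteq> B" using distinct by auto
  moreover have "insert A (insert C (insert B (insert A (set x \<union> set y)))) = ?Y" by auto
  ultimately have "chord_sum m C {} False (x @ A # B # y @ A # C # z @ B # C # t)
      = signed_sum m ?Y z - m B"
    and "chord_sum m C {} False (x @ B # A # y @ C # A # z @ C # B # t)
      = - m A + signed_sum m ?Y z"
    using chord_sum_eq_signed_sum[of C "x @ A # B # y @ [A]" "z @ [B]" m "{}" t]
      chord_sum_eq_signed_sum[of C "x @ B # A # y" "A # z" m "{}" "B # t"] distinct fresh
    by (simp_all add: signed_sum_append insert_commute[of B A])
  with assms show ?thesis by simp
qed

end

lemma foldr_append_comp: "foldr f (xs @ ys) = foldr f xs \<circ> foldr f ys"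
  by (simp add: fun_eq_iff)

definition chord_index :: "('b \<Rightarrow> int) \<Rightarrow> int \<Rightarrow> 'b list \<Rightarrow> 'b \<Rightarrow> int" where
  "chord_index m M w D = chord_sum m D {} False w mod M"

definition interlacing_product ::
  "('a \<Rightarrow> int \<Rightarrow> int \<Rightarrow> int) \<Rightarrow> ('a \<Rightarrow> int) \<Rightarrow> int \<Rightarrow> ('b \<Rightarrow> 'a) \<Rightarrow> 'b list \<Rightarrow> int \<Rightarrow> int" where
  "interlacing_product \<phi> \<mu> M p w = foldr (\<lambda>c. \<phi> (p c) (chord_index (\<mu> \<circ> p) M w c)) w"

lemma interlacing_product_cong:
  assumes "\<And>c. c \<in> set w \<Longrightarrow> chord_index (\<mu> \<circ> p) M w c = chord_index (\<mu> \<circ> p) M w' c"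
  shows "interlacing_product \<phi> \<mu> M p w = foldr (\<lambda>c. \<phi> (p c) (chord_index (\<mu> \<circ> p) M w' c)) w"
  unfolding interlacing_product_def using assms by (intro ext foldr_cong) auto

lemma interlacing_product_iso:
  assumes "etale_iso (set w) p w (set w') p' w'"
  shows "interlacing_product \<phi> \<mu> M p' w' = interlacing_product \<phi> \<mu> M p w"
proof -
  obtain f where f: "inj_on f (set w)" "\<forall>x\<in>set w. p' (f x) = p x" "w' = map f w"
    using assms unfolding etale_iso_def bij_betw_def by blast
  have "chord_index (\<mu> \<circ> p') M w' (f c) = chord_index (\<mu> \<circ> p) M w c" if "c \<in> set w" for c
    using chord_sum_map[of f c "{}" w "\<mu> \<circ> p'" "\<mu> \<circ> p" False] f that
    by (simp add: chord_index_def insert_absorb)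
  with f show ?thesis
    unfolding interlacing_product_def by (auto simp: foldr_map fun_eq_iff intro!: foldr_cong)
qed

lemma mod_add_multiple_eq: "M dvd (s::int) \<Longrightarrow> (a + k * s) mod M = a mod M"
  by (erule dvdE) (simp add: mult.left_commute[of k M])

locale interlacing_data =
  fixes \<tau> :: "'a \<Rightarrow> 'a" and \<phi> :: "'a \<Rightarrow> int \<Rightarrow> int \<Rightarrow> int" and \<mu> :: "'a \<Rightarrow> int" and M :: int
  assumes involution: "\<tau> \<circ> \<tau> = id"
    and weight_cancels: "M dvd \<mu> a + \<mu> (\<tau> a)"
    and phi_zero_involution: "\<phi> a 0 \<circ> \<phi> a 0 = id"
    and phi_tau_inverse: "\<phi> (\<tau> a) k \<circ> \<phi> a k = id"
    and phi_commute: "\<phi> a k \<circ> \<phi> a l = \<phi> a l \<circ> \<phi> a k"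
begin

abbreviation "\<Pi> \<equiv> interlacing_product \<phi> \<mu> M"

lemma move1_invariant:
  assumes "is_nanoword (x @ [A, A] @ y)"
  shows "\<Pi> p (x @ y) = \<Pi> p (x @ [A, A] @ y)"
proof -
  let ?w = "x @ [A, A] @ y"
  let ?g = "\<lambda>c. \<phi> (p c) (chord_index (\<mu> \<circ> p) M ?w c)"
  have "count_list ?w A = 2" by (rule count_list_nanoword[OF assms]) simp
  then have A: "A \<notin> set x" "A \<notin> set y" by (auto simp: count_list_0_iff[symmetric])
  have "chord_index (\<mu> \<circ> p) M (x @ y) c = chord_index (\<mu> \<circ> p) M ?w c" if "c \<in> set (x @ y)" for c
  proof -
    from that A have "A \<noteq> c" by auto
    with A show ?thesis
      using chord_sum_remove_repeat[of A c "{}" x y "\<mu> \<circ> p" False] by (simp add: chord_index_def)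
  qed
  then have "\<Pi> p (x @ y) = foldr ?g x \<circ> foldr ?g y"
    by (subst interlacing_product_cong) (auto simp: foldr_append_comp)
  also have "\<dots> = foldr ?g x \<circ> (\<phi> (p A) 0 \<circ> \<phi> (p A) 0) \<circ> foldr ?g y"
    by (simp add: phi_zero_involution)
  also have "\<dots> = \<Pi> p ?w"
    using chord_sum_eq_signed_sum[of A x "[]" "\<mu> \<circ> p" "{}" y] A
    by (simp add: interlacing_product_def chord_index_def foldr_append_comp o_assoc)
  finally show ?thesis .
qed

lemma move2_invariant:
  assumes nw: "is_nanoword (x @ [A, B] @ y @ [B, A] @ z)" and pB: "p B = \<tau> (p A)"
  shows "\<Pi> p (x @ y @ z) = \<Pi> p (x @ [A, B] @ y @ [B, A] @ z)"
proof -
  let ?w = "x @ [A, B] @ y @ [B, A] @ z"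
  let ?g = "\<lambda>c. \<phi> (p c) (chord_index (\<mu> \<circ> p) M ?w c)"
  have "count_list ?w A = 2" by (rule count_list_nanoword[OF nw]) simp
  moreover have "count_list ?w B = 2" by (rule count_list_nanoword[OF nw]) simp
  ultimately have AB: "A \<noteq> B" and fresh: "{A, B} \<inter> set (x @ y @ z) = {}"
    by (auto simp: count_list_0_iff[symmetric] split: if_splits)
  have "chord_index (\<mu> \<circ> p) M (x @ y @ z) c = chord_index (\<mu> \<circ> p) M ?w c"
    if "c \<in> set (x @ y @ z)" for c
  proof -
    from that fresh have "A \<noteq> c" "B \<noteq> c" by auto
    then obtain k where "chord_sum (\<mu> \<circ> p) c {} False ?w
        = chord_sum (\<mu> \<circ> p) c {} False (x @ y @ z) + k * (\<mu> (p A) + \<mu> (p B))"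
      using AB fresh chord_sum_remove_cancelling_pair[of A c B "{}" x y z "\<mu> \<circ> p" False] by auto
    with weight_cancels[of "p A"] pB show ?thesis
      by (simp add: chord_index_def mod_add_multiple_eq)
  qed
  moreover have "chord_index (\<mu> \<circ> p) M ?w B = chord_index (\<mu> \<circ> p) M ?w A"
    using chord_sum_eq_signed_sum[of A x "B # y @ [B]" "\<mu> \<circ> p" "{}" z]
      chord_sum_eq_signed_sum[of B "x @ [A]" y "\<mu> \<circ> p" "{}" "A # z"] AB fresh
    by (auto simp: chord_index_def signed_sum_append insert_commute)
  then have inverse: "?g A \<circ> ?g B = id" "?g B \<circ> ?g A = id"
    using phi_tau_inverse[of "p A"] phi_tau_inverse[of "\<tau> (p A)"] pB
    by (simp_all add: pointfree_idE[OF involution])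
  ultimately have "\<Pi> p (x @ y @ z) = foldr ?g x \<circ> foldr ?g y \<circ> foldr ?g z"
    by (subst interlacing_product_cong) (auto simp: foldr_append_comp)
  also have "\<dots> = foldr ?g x \<circ> (?g A \<circ> ?g B) \<circ> foldr ?g y \<circ> (?g B \<circ> ?g A) \<circ> foldr ?g z"
    by (simp only: inverse comp_id)
  also have "\<dots> = \<Pi> p ?w"
    by (simp add: interlacing_product_def foldr_append_comp o_assoc)
  finally show ?thesis .
qed

lemma move3_invariant:
  assumes nw: "is_nanoword (x @ [A, B] @ y @ [A, C] @ z @ [B, C] @ t)"
    and distinct: "distinct [A, B, C]" and p: "p A = p B" "p B = p C"
  shows "\<Pi> p (x @ [B, A] @ y @ [C, A] @ z @ [C, B] @ t) = \<Pi> p (x @ [A, B] @ y @ [A, C] @ z @ [B, C] @ t)"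
proof -
  let ?w = "x @ [A, B] @ y @ [A, C] @ z @ [B, C] @ t"
  let ?g = "\<lambda>c. \<phi> (p c) (chord_index (\<mu> \<circ> p) M ?w c)"
  have "count_list ?w A = 2" by (rule count_list_nanoword[OF nw]) simp
  moreover have "count_list ?w B = 2" by (rule count_list_nanoword[OF nw]) simp
  moreover have "count_list ?w C = 2" by (rule count_list_nanoword[OF nw]) simp
  ultimately have fresh: "{A, B, C} \<inter> set (x @ y @ z @ t) = {}"
    using distinct by (auto simp: count_list_0_iff[symmetric])
  have "chord_index (\<mu> \<circ> p) M (x @ [B, A] @ y @ [C, A] @ z @ [C, B] @ t) c = chord_index (\<mu> \<circ> p) M ?w c" for c
    using chord_sum_move3_other[OF distinct fresh] chord_sum_move3_first[OF distinct fresh]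
      chord_sum_move3_second[OF distinct fresh] chord_sum_move3_third[OF distinct fresh] p
    by (cases "c \<in> {A, B, C}") (auto simp: chord_index_def)
  then have "\<Pi> p (x @ [B, A] @ y @ [C, A] @ z @ [C, B] @ t)
      = foldr ?g x \<circ> (?g B \<circ> ?g A) \<circ> foldr ?g y \<circ> (?g C \<circ> ?g A) \<circ> foldr ?g z \<circ> (?g C \<circ> ?g B) \<circ> foldr ?g t"
    by (subst interlacing_product_cong) (auto simp: foldr_append_comp o_assoc)
  also have "\<dots> = foldr ?g x \<circ> (?g A \<circ> ?g B) \<circ> foldr ?g y \<circ> (?g A \<circ> ?g C) \<circ> foldr ?g z \<circ> (?g B \<circ> ?g C) \<circ> foldr ?g t"
    using phi_commute p by simp
  also have "\<dots> = \<Pi> p ?w"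
    by (simp add: interlacing_product_def foldr_append_comp o_assoc)
  finally show ?thesis .
qed

lemma step_invariant:
  assumes "nano_step \<tau> (p, w) (p', w')"
  shows "\<Pi> p' w' = \<Pi> p w"
  using assms
proof (cases rule: nano_step.cases)
  case iso
  then show ?thesis by (simp add: interlacing_product_iso)
next
  case (move1 x A y)
  then show ?thesis by (simp add: move1_invariant)
next
  case (move2 x A B y z)
  then show ?thesis by (simp add: move2_invariant)
next
  case (move3 x A B y C z t)
  with move3_invariant[of x A B y C z t p] show ?thesis by simp
qed

lemma homotopy_invariant:
  assumes "nano_homotopic \<tau> (p, w) (p', w')"
  shows "\<Pi> p' w' = \<Pi> p w"
proof -
  have "\<Pi> (fst u) (snd u) = \<Pi> p w" if "nano_homotopic \<tau> (p, w) u" for u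
    using that by (induction rule: nano_homotopic_induct) (auto dest!: step_invariant)
  from this[OF assms] show ?thesis by simp
qed

lemma not_homot_skew_symmetric:
  assumes "\<Pi> fst (desing w) 0 \<noteq> \<Pi> (\<tau> \<circ> fst) (rev (desing w)) 0"
  shows "\<not> homot_skew_symmetric \<tau> w"
  using assms homotopy_invariant unfolding homot_skew_symmetric_def by metis

end

section \<open>Words of length five\<close>

lemmas desing_simps = desing_def desing_letter_def Let_def upt_rec

definition three_two_words :: "'a \<Rightarrow> 'a \<Rightarrow> 'a list set" where
  "three_two_words A B = {[A,A,A,B,B], [A,A,B,A,B], [A,A,B,B,A], [A,B,A,A,B], [A,B,A,B,A],
     [A,B,B,A,A], [B,A,A,A,B], [B,A,A,B,A], [B,A,B,A,A], [B,B,A,A,A]}"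

lemma in_three_two_words:
  assumes "A \<noteq> B" "length w = 5" "set w \<subseteq> {A, B}" "count_list w A = 3"
  shows "w \<in> three_two_words A B"
proof -
  obtain a b c d e where w: "w = [a, b, c, d, e]"
    using assms(2) by (auto simp: length_Suc_conv numeral_eq_Suc)
  have "a \<in> {A, B}" "b \<in> {A, B}" "c \<in> {A, B}" "d \<in> {A, B}" "e \<in> {A, B}"
    using assms(3) w by auto
  then show ?thesis
    using assms(1,4) unfolding w three_two_words_def by (elim insertE emptyE) simp_all
qed

lemma mult_one_free_length5_cases:
  assumes "length w = 5" "mult_one_free w"
  obtains A where "w = [A, A, A, A, A]" | A B where "A \<noteq> B" "w \<in> three_two_words A B"
proof -
  have count: "sum (count_list w) (set w) = 5"
    using sum_count_set[of w "set w"] assms(1) by simp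
  moreover have "sum (\<lambda>_. 2) (set w) \<le> sum (count_list w) (set w)"
    using assms(2) by (intro sum_mono) (simp add: mult_one_free_def)
  ultimately have "card (set w) \<le> 2" by simp
  moreover have "card (set w) \<noteq> 0" using assms(1) by auto
  ultimately have "card (set w) = 1 \<or> card (set w) = 2" by linarith
  then consider A where "set w = {A}" | A B where "A \<noteq> B" "set w = {A, B}"
    by (auto simp: card_1_singleton_iff card_2_iff)
  then show thesis
  proof cases
    case (1 A)
    then have "w = replicate 5 A" using replicate_length_same[of w A] assms(1) by auto
    then show thesis by (intro that(1)) (simp add: numeral_eq_Suc)
  next
    case (2 A B)
    with count have "count_list w A + count_list w B = 5" by simp
    moreover have "count_list w A \<ge> 2" "count_list w B \<ge> 2"
      using assms(2) 2 by (auto simp: mult_one_free_def)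
    ultimately have "count_list w A = 3 \<or> count_list w B = 3" by linarith
    then show thesis
    proof
      assume "count_list w A = 3"
      with 2 assms(1) show thesis by (intro that(2)[of A B] in_three_two_words) auto
    next
      assume "count_list w B = 3"
      with 2 assms(1) show thesis by (intro that(2)[of B A] in_three_two_words) auto
    qed
  qed
qed

(* [a, b, a, c, b, c] is the desingularization of a triple letter.  The homotopy first creates
   the auxiliary letters f, g, h, i by inverse moves (2) and then removes everything. *)
lemma nano_homotopic_remove_abacbc:
  assumes P: "\<tau> P = P" and p: "\<forall>x\<in>{a, b, c, f, g, h, i}. p x = P"
    and distinct: "distinct [a, b, c, f, g, h, i]"
    and fresh: "{a, b, c, f, g, h, i} \<inter> set (u @ v) = {}"
    and nw: "is_nanoword (u @ [a, b, a, c, b, c] @ v)"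
  shows "nano_homotopic \<tau> (p, u @ [a, b, a, c, b, c] @ v) (p, u @ v)"
proof -
  have N: "is_nanoword (u @ s @ v)" if "\<forall>x\<in>set s. count_list s x = 2" "set s \<subseteq> {a, b, c, f, g, h, i}" for s
    using fresh that by (intro is_nanoword_replace_infix[OF nw]) auto
  have nw1: "is_nanoword (u @ [b, f, g, a, c, g, f, a, c, b] @ v)" by (rule N) (use distinct in auto)
  have nw2: "is_nanoword (u @ [b, f, h, i, g, a, c, g, f, a, c, i, h, b] @ v)" by (rule N) (use distinct in auto)
  have nw3: "is_nanoword (u @ [b, f, h, g, i, a, g, c, f, a, i, c, h, b] @ v)" by (rule N) (use distinct in auto)
  have nw4: "is_nanoword (u @ [b, f, h, g, g, c, f, c, h, b] @ v)" by (rule N) (use distinct in auto)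
  have nw5: "is_nanoword (u @ [b, f, h, c, f, c, h, b] @ v)" by (rule N) (use distinct in auto)
  have nw6: "is_nanoword (u @ [b, f, f, b] @ v)" by (rule N) (use distinct in auto)
  have "nano_homotopic \<tau> (p, u @ [a, b, a, c, b, c] @ v) (p, u @ [b, a, c, a, c, b] @ v)"
    using nano_step.move3[of u a b "[]" c "[]" v p \<tau>] nw distinct p
    by (simp add: nano_step_imp_homotopic)
  also have "nano_homotopic \<tau> \<dots> (p, u @ [b, f, g, a, c, g, f, a, c, b] @ v)"
    using nano_step.move2[of "u @ [b]" f g "[a, c]" "[a, c, b] @ v" p \<tau>] nw1 p P
    by (simp add: nano_step_converse_imp_homotopic)
  also have "nano_homotopic \<tau> \<dots> (p, u @ [b, f, h, i, g, a, c, g, f, a, c, i, h, b] @ v)"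
    using nano_step.move2[of "u @ [b, f]" h i "[g, a, c, g, f, a, c]" "[b] @ v" p \<tau>] nw2 p P
    by (simp add: nano_step_converse_imp_homotopic)
  also have "nano_homotopic \<tau> \<dots> (p, u @ [b, f, h, g, i, a, g, c, f, a, i, c, h, b] @ v)"
    using nano_step.move3[of "u @ [b, f, h]" g i "[a]" c "[f, a]" "[h, b] @ v" p \<tau>] nw3 distinct p
    by (auto intro: nano_step_converse_imp_homotopic)
  also have "nano_homotopic \<tau> \<dots> (p, u @ [b, f, h, g, g, c, f, c, h, b] @ v)"
    using nano_step.move2[of "u @ [b, f, h, g]" i a "[g, c, f]" "[c, h, b] @ v" p \<tau>] nw3 p P
    by (simp add: nano_step_imp_homotopic)
  also have "nano_homotopic \<tau> \<dots> (p, u @ [b, f, h, c, f, c, h, b] @ v)"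
    using nano_step.move1[of "u @ [b, f, h]" g "[c, f, c, h, b] @ v" \<tau> p] nw4
    by (simp add: nano_step_imp_homotopic)
  also have "nano_homotopic \<tau> \<dots> (p, u @ [b, f, f, b] @ v)"
    using nano_step.move2[of "u @ [b, f]" h c "[f]" "[b] @ v" p \<tau>] nw5 p P
    by (simp add: nano_step_imp_homotopic)
  also have "nano_homotopic \<tau> \<dots> (p, u @ v)"
    using nano_step.move2[of u b f "[]" v p \<tau>] nw6 p P
    by (simp add: nano_step_imp_homotopic)
  finally show ?thesis .
qed

lemma contractible_fixed_triple_and_pair:
  assumes "\<tau> A = A" "A \<noteq> B"
    and "w \<in> {[A, A, A, B, B], [A, A, B, B, A], [A, B, B, A, A], [B, B, A, A, A], [B, A, A, A, B]}"
  shows "contractible \<tau> w"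
proof -
  let ?T = "[(A, 1, 2), (A, 1, 3), (A, 1, 2), (A, 2, 3), (A, 1, 3), (A, 2, 3)] :: ('a \<times> nat \<times> nat) list"
  let ?d = "(B, 1 :: nat, 2 :: nat)"
  \<comment> \<open>The letters (A, 0, j) never occur in a desingularization: they serve as auxiliary letters.\<close>
  have triple: "nano_homotopic \<tau> (fst, u @ ?T @ v) (fst, u @ v)"
    if "(u, v) \<in> {([], []), ([?d], [?d])}" for u v
    using that assms(1,2)
    by (intro nano_homotopic_remove_abacbc[where P = A and f = "(A, 0, 1)" and g = "(A, 0, 2)"
          and h = "(A, 0, 3)" and i = "(A, 0, 4)"])
       (auto simp: is_nanoword_def)
  have adjacent: "nano_homotopic \<tau> (fst, u @ [?d, ?d] @ v) (fst, [])" if "u @ v = ?T" for u v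
  proof -
    have "nano_homotopic \<tau> (fst, u @ [?d, ?d] @ v) (fst, ?T)"
      using nano_homotopic_remove_repeat[of u v ?d] that assms(2) by (simp add: is_nanoword_def)
    also have "nano_homotopic \<tau> (fst, ?T) (fst, [])"
      using triple[of "[]" "[]"] by simp
    finally show ?thesis .
  qed
  have "nano_homotopic \<tau> (fst, desing w) (fst, [])"
    using assms(3)
  proof (elim insertE emptyE)
    assume "w = [A, A, A, B, B]"
    with assms(2) have "desing w = ?T @ [?d, ?d] @ []"
      by (simp add: desing_simps)
    with adjacent[of ?T "[]"] show ?thesis by simp
  next
    assume "w = [A, A, B, B, A]"
    with assms(2) have "desing w = take 4 ?T @ [?d, ?d] @ drop 4 ?T"
      by (simp add: desing_simps)
    with adjacent[of "take 4 ?T" "drop 4 ?T"] show ?thesis by simp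
  next
    assume "w = [A, B, B, A, A]"
    with assms(2) have "desing w = take 2 ?T @ [?d, ?d] @ drop 2 ?T"
      by (simp add: desing_simps)
    with adjacent[of "take 2 ?T" "drop 2 ?T"] show ?thesis by simp
  next
    assume "w = [B, B, A, A, A]"
    with assms(2) have "desing w = [] @ [?d, ?d] @ ?T"
      by (simp add: desing_simps)
    with adjacent[of "[]" ?T] show ?thesis by simp
  next
    assume "w = [B, A, A, A, B]"
    then have "desing w = [?d] @ ?T @ [?d]"
      using assms(2) by (simp add: desing_simps)
    also have "nano_homotopic \<tau> (fst, \<dots>) (fst, [?d, ?d])"
      using triple[of "[?d]" "[?d]"] by simp
    also have "nano_homotopic \<tau> \<dots> (fst, [])"
      using nano_homotopic_remove_repeat[of "[]" "[]" ?d] by (simp add: is_nanoword_def)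
    finally show ?thesis .
  qed
  then show ?thesis by (simp add: contractible_def)
qed

lemma contractible_swapped_ABABA:
  assumes "\<tau> A = B" "A \<noteq> B"
  shows "contractible \<tau> [A, B, A, B, A]"
proof -
  let ?a = "(A, 1 :: nat, 2 :: nat)" and ?b = "(A, 1 :: nat, 3 :: nat)" and ?c = "(A, 2 :: nat, 3 :: nat)"
    and ?d = "(B, 1 :: nat, 2 :: nat)"
  have "desing [A, B, A, B, A] = [?a] @ [?b, ?d] @ [?a, ?c] @ [?d, ?b] @ [?c]"
    using assms(2) by (simp add: desing_simps)
  also have "nano_homotopic \<tau> (fst, \<dots>) (fst, [?a, ?a, ?c, ?c])"
    using nano_step.move2[of "[?a]" ?b ?d "[?a, ?c]" "[?c]" fst \<tau>] assms
    by (simp add: is_nanoword_def nano_step_imp_homotopic)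
  also have "nano_homotopic \<tau> \<dots> (fst, [?c, ?c])"
    using nano_step.move1[of "[]" ?a "[?c, ?c]" \<tau> fst] by (simp add: is_nanoword_def nano_step_imp_homotopic)
  also have "nano_homotopic \<tau> \<dots> (fst, [])"
    using nano_step.move1[of "[]" ?c "[]" \<tau> fst] by (simp add: is_nanoword_def nano_step_imp_homotopic)
  finally show ?thesis by (simp add: contractible_def)
qed

lemma homot_skew_symmetric_fixed_palindrome:
  assumes "\<tau> A = A" "\<tau> B = B" "w = [A, A, A, A, A] \<or> A \<noteq> B \<and> w \<in> {[A, B, A, B, A], [B, A, A, A, B]}"
  shows "homot_skew_symmetric \<tau> w"
  by (rule homot_skew_symmetric_if_involutive_iso
      [where f = "\<lambda>(x, i, j). (\<tau> x, count_list w x + 1 - j, count_list w x + 1 - i)"];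
      use assms in \<open>elim disjE conjE insertE emptyE;
        simp add: desing_simps is_nanoword_def\<close>)

definition shift_phi :: "('a \<Rightarrow> 'a) \<Rightarrow> 'a \<Rightarrow> 'a \<Rightarrow> int \<Rightarrow> int \<Rightarrow> int" where
  "shift_phi \<tau> A x k =
     (if k = 1 \<and> x = A then (\<lambda>n. n + 1) else if k = 1 \<and> x = \<tau> A then (\<lambda>n. n - 1) else id)"

definition reflect_negate_phi :: "('a \<Rightarrow> 'a) \<Rightarrow> 'a \<Rightarrow> 'a \<Rightarrow> 'a \<Rightarrow> int \<Rightarrow> int \<Rightarrow> int" where
  "reflect_negate_phi \<tau> A B x k =
     (if k = 1 \<and> x = A then (\<lambda>n. 1 - n) else if k = 0 \<and> (x = B \<or> x = \<tau> B) then uminus else id)"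

lemma interlacing_data_shift:
  assumes "\<tau> \<circ> \<tau> = id" "\<tau> A \<noteq> A"
  shows "interlacing_data \<tau> (shift_phi \<tau> A) (\<lambda>x. if x = A \<or> x = \<tau> A then 1 else 0) 2"
proof -
  have "\<tau> x = A \<longleftrightarrow> x = \<tau> A" "\<tau> x = \<tau> A \<longleftrightarrow> x = A" for x
    using pointfree_idE[OF assms(1)] by metis+
  with assms show ?thesis
    by unfold_locales (auto simp: shift_phi_def fun_eq_iff)
qed

lemma interlacing_data_reflect_negate_fixed:
  assumes "\<tau> \<circ> \<tau> = id" "\<tau> A = A" "\<tau> B = B" "A \<noteq> B"
  shows "interlacing_data \<tau> (reflect_negate_phi \<tau> A B) (\<lambda>x. if x = A then 1 else 0) 2"
proof -
  have "\<tau> x = A \<longleftrightarrow> x = A" "\<tau> x = B \<longleftrightarrow> x = B" for x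
    using pointfree_idE[OF assms(1)] assms(2,3) by metis+
  with assms show ?thesis
    by unfold_locales (auto simp: reflect_negate_phi_def fun_eq_iff assms(3))
qed

lemma interlacing_data_reflect_negate_moved:
  assumes "\<tau> \<circ> \<tau> = id" "\<tau> A = A" "\<tau> B \<noteq> B" "A \<noteq> B"
  shows "interlacing_data \<tau> (reflect_negate_phi \<tau> A B)
    (\<lambda>x. if x = A then 2 else if x = B then 1 else if x = \<tau> B then -1 else 0) 4"
proof -
  have "\<tau> x = A \<longleftrightarrow> x = A" "\<tau> x = B \<longleftrightarrow> x = \<tau> B" "\<tau> x = \<tau> B \<longleftrightarrow> x = B" for x
    using pointfree_idE[OF assms(1)] assms(2) by metis+
  moreover have "\<tau> B \<noteq> A" using assms(2,4) by (metis pointfree_idE[OF assms(1)])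
  ultimately show ?thesis using assms
    by unfold_locales (auto simp: reflect_negate_phi_def fun_eq_iff)
qed

lemma not_homot_skew_symmetric_moved:
  assumes "\<tau> \<circ> \<tau> = id" "\<tau> A \<noteq> A"
    and "w = [A, A, A, A, A] \<or> A \<noteq> B \<and> w \<in> three_two_words A B \<and> \<not> (\<tau> A = B \<and> w = [A, B, A, B, A])"
  shows "\<not> homot_skew_symmetric \<tau> w"
  using assms(2,3) unfolding three_two_words_def
  by (intro interlacing_data.not_homot_skew_symmetric[OF interlacing_data_shift[OF assms(1,2)]])
     (elim disjE conjE insertE emptyE;
      simp add: desing_simps interlacing_product_def chord_index_def shift_phi_def)

lemma not_homot_skew_symmetric_fixed:
  assumes "\<tau> \<circ> \<tau> = id" "\<tau> A = A" "\<tau> B = B" "A \<noteq> B"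
    and "w \<in> {[A, A, B, A, B], [A, B, A, A, B], [B, A, A, B, A], [B, A, B, A, A]}"
  shows "\<not> homot_skew_symmetric \<tau> w"
  using assms(2-5)
  by (intro interlacing_data.not_homot_skew_symmetric[OF interlacing_data_reflect_negate_fixed[OF assms(1-4)]])
     (elim insertE emptyE;
      simp add: desing_simps interlacing_product_def chord_index_def reflect_negate_phi_def)

lemma not_homot_skew_symmetric_fixed_moved:
  assumes "\<tau> \<circ> \<tau> = id" "\<tau> A = A" "\<tau> B \<noteq> B" "A \<noteq> B"
    and "w \<in> {[A, A, B, A, B], [A, B, A, A, B], [A, B, A, B, A], [B, A, A, B, A], [B, A, B, A, A]}"
  shows "\<not> homot_skew_symmetric \<tau> w"
proof -
  have "\<tau> B \<noteq> A" using assms(2,4) by (metis pointfree_idE[OF assms(1)])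
  with assms(2-5) show ?thesis
    by (intro interlacing_data.not_homot_skew_symmetric[OF interlacing_data_reflect_negate_moved[OF assms(1-4)]])
       (elim insertE emptyE;
        simp add: desing_simps interlacing_product_def chord_index_def reflect_negate_phi_def)
qed

lemma three_two_words_trichotomy:
  assumes inv: "\<tau> \<circ> \<tau> = id" and AB: "A \<noteq> B" and w: "w \<in> three_two_words A B"
  shows "contractible \<tau> w \<or> skew_symmetric \<tau> w \<and> homot_skew_symmetric \<tau> w
       \<or> \<not> skew_symmetric \<tau> w \<and> \<not> homot_skew_symmetric \<tau> w"
proof -
  note skew = skew_symmetric_iff[OF inv]
  consider "\<tau> A \<noteq> A" | "\<tau> A = A" "\<tau> B = B" | "\<tau> A = A" "\<tau> B \<noteq> B" by blast
  then show ?thesis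
  proof cases
    case 1
    show ?thesis
    proof (cases "\<tau> A = B \<and> w = [A, B, A, B, A]")
      case True
      then show ?thesis using contractible_swapped_ABABA[OF _ AB] by blast
    next
      case False
      have "map \<tau> w \<noteq> rev w"
        using w 1 unfolding three_two_words_def by (elim insertE emptyE) auto
      moreover have "\<not> homot_skew_symmetric \<tau> w"
        using False AB w by (intro not_homot_skew_symmetric_moved[OF inv 1, of w B]) blast
      ultimately show ?thesis using skew by blast
    qed
  next
    case 2
    consider "w \<in> {[A, A, A, B, B], [A, A, B, B, A], [A, B, B, A, A], [B, B, A, A, A], [B, A, A, A, B]}"
      | "w = [A, B, A, B, A]"
      | "w \<in> {[A, A, B, A, B], [A, B, A, A, B], [B, A, A, B, A], [B, A, B, A, A]}"
      using w unfolding three_two_words_def by blast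
    then show ?thesis
    proof cases
      case 1
      then show ?thesis using contractible_fixed_triple_and_pair[of \<tau> A B w] \<open>\<tau> A = A\<close> AB by blast
    next
      case 2
      then have "map \<tau> w = rev w" using \<open>\<tau> A = A\<close> \<open>\<tau> B = B\<close> by simp
      moreover have "homot_skew_symmetric \<tau> w"
        using 2 AB by (intro homot_skew_symmetric_fixed_palindrome[OF \<open>\<tau> A = A\<close> \<open>\<tau> B = B\<close>]) simp
      ultimately show ?thesis using skew by blast
    next
      case 3
      then have "map \<tau> w \<noteq> rev w" using \<open>\<tau> A = A\<close> \<open>\<tau> B = B\<close> AB by (elim insertE emptyE) auto
      with 3 show ?thesis using not_homot_skew_symmetric_fixed[OF inv 2 AB] skew by blast
    qed
  next
    case 3
    consider "w \<in> {[A, A, A, B, B], [A, A, B, B, A], [A, B, B, A, A], [B, B, A, A, A], [B, A, A, A, B]}"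
      | "w \<in> {[A, A, B, A, B], [A, B, A, A, B], [A, B, A, B, A], [B, A, A, B, A], [B, A, B, A, A]}"
      using w unfolding three_two_words_def by blast
    then show ?thesis
    proof cases
      case 1
      then show ?thesis using contractible_fixed_triple_and_pair[of \<tau> A B w] \<open>\<tau> A = A\<close> AB by blast
    next
      case 2
      then have "map \<tau> w \<noteq> rev w" using \<open>\<tau> A = A\<close> \<open>\<tau> B \<noteq> B\<close> AB by (elim insertE emptyE) auto
      with 2 show ?thesis using not_homot_skew_symmetric_fixed_moved[OF inv 3 AB] skew by blast
    qed
  qed
qed

lemma length5_trichotomy:
  assumes inv: "\<tau> \<circ> \<tau> = id" and "length w = 5" "mult_one_free w"
  shows "contractible \<tau> w \<or> skew_symmetric \<tau> w \<and> homot_skew_symmetric \<tau> w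
       \<or> \<not> skew_symmetric \<tau> w \<and> \<not> homot_skew_symmetric \<tau> w"
  using assms(2,3)
proof (cases rule: mult_one_free_length5_cases)
  case (1 A)
  show ?thesis
  proof (cases "\<tau> A = A")
    case True
    with 1 show ?thesis
      using homot_skew_symmetric_fixed_palindrome[of \<tau> A A w] skew_symmetric_iff[OF inv] by simp
  next
    case False
    with 1 show ?thesis
      using not_homot_skew_symmetric_moved[OF inv False, of w A] skew_symmetric_iff[OF inv] by simp
  qed
next
  case (2 A B)
  then show ?thesis by (rule three_two_words_trichotomy[OF inv])
qed

theorem corollary9p4:
  fixes \<tau> :: "'a \<Rightarrow> 'a" and w :: "'a list"
  assumes "\<tau> \<circ> \<tau> = id"
    and "length w = 5"
    and "mult_one_free w"
  shows "homot_skew_symmetric \<tau> w \<longleftrightarrow> contractible \<tau> w \<or> skew_symmetric \<tau> w"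
  using length5_trichotomy[OF assms] homot_skew_symmetric_if_contractible[OF assms(1)] by blast

end
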